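(* For every fixed integer $K\ge 1$, \[ \sum_{k=0}^{m-2}\zeta(m-k,\{1\}_k)=\sum_{j=1}^{K}\binom{2j}{j}\frac{1}{j^{m}}+O\!\left((K+1)^{-m}\right)\qquad(m\to\infty), \] i.e. $\sum_{k=0}^{m-2}\zeta(m-k,\{1\}_k)\approx 2+\frac{6}{2^m}+\frac{20}{3^m}+\frac{70}{4^m}+\cdots$. In particular, the average of the $m-1$ numbers $\zeta(m),\zeta(m-1,1),\dots,\zeta(2,\{1\}_{m-2})$ is asymptotic to $2/m$ as $m\to\infty$.
   Context: For positive integers $s_1\ge 2, s_2,\dots,s_l$, the multiple zeta value is $\zeta(s_1,\dots,s_l):=\sum_{n_1>n_2>\cdots>n_l>0} n_1^{-s_1}\cdots n_l^{-s_l}$. The notation $\{1\}_k$ denotes the string $1,1,\dots,1$ ($k$ times); for $k=0$ it is empty. *)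

theory Defs
  imports Complex_Main "HOL-Library.Landau_Symbols"
begin

text \<open>Truncated multiple zeta sum:
  mzv_trunc [s1,...,sl] N = sum over N >= n1 > n2 > ... > nl > 0 of n1^(-s1) ... nl^(-sl).\<close>
fun mzv_trunc :: "nat list \<Rightarrow> nat \<Rightarrow> real" where
  "mzv_trunc [] N = 1"
| "mzv_trunc (s # ss) N = (\<Sum>n = 1..N. (1 / real n ^ s) * mzv_trunc ss (n - 1))"

fun mzv :: "nat list \<Rightarrow> real" where
  "mzv [] = 1"
| "mzv (s # ss) = (\<Sum>n. (1 / real (Suc n) ^ s) * mzv_trunc ss n)"

end

theory Submission
  imports Defs "HOL-Library.Extended_Nonnegative_Real" "HOL-Analysis.Summation_Tests"
    "HOL-Real_Asymp.Real_Asymp"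
begin

text \<open>
  Write e_k(n) (esym_recip k n) for the k-th elementary symmetric function of
  1, 1/2, ..., 1/n, so that zeta(s, {1}_k) = sum_n e_k(n) / (n+1)^s and
  sum_k x^k e_k(n) = prod_{j<=n} (1 + x/j), which equals binomial(2n+1, n) at x = n + 1.
  Hence the n-th term of sum_{k<=h} zeta(m-k, {1}_k) is binomial(2n+1, n) / (n+1)^m when
  n <= h, and at most (n+1)^(h+1-m) in general; if 2h + 2 <= m, the terms with n >= K add up
  to O((K+1)^-m). The duality zeta(p+2, {1}_q) = zeta(q+2, {1}_p), proved with the connected
  sums of Seki and Yamamoto, folds the upper half of the range 0 <= k <= m-2 onto the lower
  half, so the whole sum is twice such a block sum up to O((K+1)^-m); finally
  binomial(2j, j) = 2 binomial(2j-1, j-1).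
\<close>

definition esym_recip :: "nat \<Rightarrow> nat \<Rightarrow> real" where
  "esym_recip k N = mzv_trunc (replicate k 1) N"

lemma esym_recip_0 [simp]: "esym_recip 0 N = 1"
  by (simp add: esym_recip_def)

lemma esym_recip_Suc: "esym_recip (Suc k) N = (\<Sum>n = 1..N. esym_recip k (n - 1) / real n)"
  by (simp add: esym_recip_def)

lemma esym_recip_nonneg: "esym_recip k N \<ge> 0"
  by (induction k arbitrary: N) (auto simp: esym_recip_Suc intro!: sum_nonneg)

lemma esym_recip_Suc_Suc:
  "esym_recip (Suc k) (Suc N) = esym_recip (Suc k) N + esym_recip k N / real (Suc N)"
  by (simp add: esym_recip_Suc)

lemma esym_recip_eq_0: "N < k \<Longrightarrow> esym_recip k N = 0"
proof (induction N arbitrary: k)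
  case 0
  then show ?case by (cases k) (auto simp: esym_recip_Suc)
next
  case (Suc N)
  then obtain k' where "k = Suc k'" by (cases k) auto
  with Suc show ?case by (simp add: esym_recip_Suc_Suc)
qed

lemma esym_recip_generating_function:
  "N \<le> h \<Longrightarrow> (\<Sum>k\<le>h. x ^ k * esym_recip k N) = (\<Prod>j = 1..N. 1 + x / real j)"
proof (induction N arbitrary: h)
  case 0
  have "(\<Sum>k\<le>h. x ^ k * esym_recip k 0) = (\<Sum>k\<le>h. if k = 0 then 1 else 0)"
    by (intro sum.cong) (auto simp: esym_recip_eq_0)
  then show ?case by simp
next
  case (Suc N)
  then obtain h' where h: "h = Suc h'" and "N \<le> h'" by (cases h) auto
  have "(\<Sum>k\<le>h. x ^ k * esym_recip k (Suc N))
      = 1 + (\<Sum>k\<le>h'. x ^ Suc k * esym_recip (Suc k) N)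
          + x / real (Suc N) * (\<Sum>k\<le>h'. x ^ k * esym_recip k N)"
    unfolding h sum.atMost_Suc_shift
    by (simp add: esym_recip_Suc_Suc algebra_simps sum.distrib sum_distrib_left)
  also have "1 + (\<Sum>k\<le>h'. x ^ Suc k * esym_recip (Suc k) N) = (\<Sum>k\<le>h. x ^ k * esym_recip k N)"
    unfolding h sum.atMost_Suc_shift by simp
  finally show ?case
    using Suc.IH[of h] Suc.IH[of h'] \<open>N \<le> h'\<close> h
    by (simp add: prod.nat_ivl_Suc' algebra_simps)
qed

lemma esym_recip_weighted_sum_le:
  assumes "x \<ge> 0"
  shows "(\<Sum>k\<le>h. x ^ k * esym_recip k N) \<le> (\<Prod>j = 1..N. 1 + x / real j)"
proof -
  have "(\<Sum>k\<le>h. x ^ k * esym_recip k N) \<le> (\<Sum>k\<le>max h N. x ^ k * esym_recip k N)"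
    using assms by (intro sum_mono2) (auto simp: esym_recip_nonneg)
  also have "\<dots> = (\<Prod>j = 1..N. 1 + x / real j)"
    by (rule esym_recip_generating_function) simp
  finally show ?thesis .
qed

lemma prod_one_plus_of_nat_divide:
  "(\<Prod>j = 1..N. 1 + real c / real j) = real ((N + c) choose N)"
proof (induction N)
  case (Suc N)
  have "Suc N * ((Suc N + c) choose Suc N) = (Suc N + c) * ((N + c) choose N)"
    using binomial_absorption[of N "Suc N + c"] by simp
  then have "real ((Suc N + c) choose Suc N) = (1 + real c / real (Suc N)) * real ((N + c) choose N)"
    by (simp add: field_simps flip: of_nat_mult del: binomial_Suc_Suc)
  moreover have "(\<Prod>j = 1..Suc N. 1 + real c / real j)
      = (1 + real c / real (Suc N)) * (\<Prod>j = 1..N. 1 + real c / real j)"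
    by (rule prod.nat_ivl_Suc') simp
  ultimately show ?case
    by (simp only: Suc.IH)
qed simp

lemma sum_esym_recip_le: "(\<Sum>k\<le>h. esym_recip k N) \<le> real (Suc N)"
  using esym_recip_weighted_sum_le[where x=1 and h=h and N=N]
    prod_one_plus_of_nat_divide[where N=N and c=1]
  by simp

lemma esym_recip_le: "esym_recip k N \<le> real (Suc N)"
  using member_le_sum[of k "{..k}" "\<lambda>k. esym_recip k N"] sum_esym_recip_le[where h=k and N=N]
  by (simp add: esym_recip_nonneg)

lemma mzv_replicate_one: "mzv (s # replicate q 1) = (\<Sum>n. esym_recip q n / real (Suc n) ^ s)"
  by (simp add: esym_recip_def)

lemma summable_inverse_Suc_squared: "summable (\<lambda>n. 1 / real (Suc n) ^ 2)"
proof -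
  have "summable (\<lambda>n. inverse (real n ^ 2))"
    by (rule inverse_power_summable) simp
  then show ?thesis
    by (subst (asm) summable_Suc_iff[symmetric]) (simp add: inverse_eq_divide)
qed

lemma summable_mzv_replicate_one:
  assumes "s \<ge> 3"
  shows "summable (\<lambda>n. esym_recip q n / real (Suc n) ^ s)"
proof (rule summable_comparison_test'[OF summable_inverse_Suc_squared])
  fix n
  have "esym_recip q n / real (Suc n) ^ s \<le> real (Suc n) / real (Suc n) ^ s"
    using esym_recip_le by (intro divide_right_mono) auto
  also have "\<dots> = 1 / real (Suc n) ^ (s - 1)"
    using assms by (cases s) auto
  also have "\<dots> \<le> 1 / real (Suc n) ^ 2"
    using assms by (intro divide_left_mono power_increasing) auto
  finally show "norm (esym_recip q n / real (Suc n) ^ s) \<le> 1 / real (Suc n) ^ 2"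
    by (simp add: esym_recip_nonneg)
qed

lemma suminf_ennreal_swap: "(\<Sum>i. \<Sum>j. f i j :: ennreal) = (\<Sum>j. \<Sum>i. f i j)"
proof -
  have inc: "incseq (\<lambda>m. \<Sum>j<m. g j :: ennreal)" for g
    by (intro monoI sum_mono2) auto
  have "(\<Sum>i. \<Sum>j. f i j) = (SUP n. \<Sum>i<n. SUP m. \<Sum>j<m. f i j)"
    by (simp add: suminf_eq_SUP)
  also have "\<dots> = (SUP n. SUP m. \<Sum>i<n. \<Sum>j<m. f i j)"
    by (subst ennreal_SUP_sum) (auto intro: inc)
  also have "\<dots> = (SUP m. SUP n. \<Sum>j<m. \<Sum>i<n. f i j)"
    by (subst SUP_commute) (intro SUP_cong refl sum.swap)
  also have "\<dots> = (SUP m. \<Sum>j<m. SUP n. \<Sum>i<n. f i j)"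
    by (subst ennreal_SUP_sum) (auto intro: inc)
  also have "\<dots> = (\<Sum>j. \<Sum>i. f i j)"
    by (simp add: suminf_eq_SUP)
  finally show ?thesis .
qed

lemma suminf_ennreal_cmult_real:
  "c \<ge> 0 \<Longrightarrow> (\<And>N. f N \<ge> 0) \<Longrightarrow>
    (\<Sum>N. ennreal (c * f N)) = ennreal c * (\<Sum>N. ennreal (f N))"
  by (simp add: ennreal_mult)

lemma suminf_ennreal_tail_swap:
  assumes tail: "\<And>N. (\<lambda>N'. if N < N' then y N' else 0) sums z N"
    and nonneg: "\<And>N. x N \<ge> 0" "\<And>N. y N \<ge> 0"
  shows "(\<Sum>N. ennreal (x N * z N)) = (\<Sum>N'. ennreal (y N' * (\<Sum>N<N'. x N)))"
proof -
  have "(\<Sum>N. ennreal (x N * z N)) = (\<Sum>N. \<Sum>N'. ennreal (if N < N' then x N * y N' else 0))"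
  proof (intro suminf_cong)
    fix N
    have "(\<lambda>N'. x N * (if N < N' then y N' else 0)) sums (x N * z N)"
      by (rule sums_mult[OF tail])
    moreover have "(\<lambda>N'. x N * (if N < N' then y N' else 0)) = (\<lambda>N'. if N < N' then x N * y N' else 0)"
      by auto
    ultimately show "ennreal (x N * z N) = (\<Sum>N'. ennreal (if N < N' then x N * y N' else 0))"
      by (intro suminf_ennreal_eq[symmetric]) (simp_all add: nonneg)
  qed
  also have "\<dots> = (\<Sum>N'. \<Sum>N. ennreal (if N < N' then x N * y N' else 0))"
    by (rule suminf_ennreal_swap)
  also have "\<dots> = (\<Sum>N'. ennreal (y N' * (\<Sum>N<N'. x N)))"
  proof (intro suminf_cong)
    fix N'
    have "(\<Sum>N. ennreal (if N < N' then x N * y N' else 0)) = (\<Sum>N<N'. ennreal (x N * y N'))"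
      by (subst suminf_finite[of "{..<N'}"]) auto
    also have "\<dots> = ennreal (y N' * (\<Sum>N<N'. x N))"
      using nonneg by (simp add: sum_distrib_left mult.commute)
    finally show "(\<Sum>N. ennreal (if N < N' then x N * y N' else 0))
        = ennreal (y N' * (\<Sum>N<N'. x N))" .
  qed
  finally show ?thesis .
qed

lemma suminf_eq_if_ennreal_suminf_eq:
  fixes f g :: "nat \<Rightarrow> real"
  assumes "\<And>n. f n \<ge> 0" "\<And>n. g n \<ge> 0" "summable g"
    and "(\<Sum>n. ennreal (f n)) = (\<Sum>n. ennreal (g n))"
  shows "suminf f = suminf g"
proof -
  have "(\<Sum>n. ennreal (f n)) = ennreal (suminf g)"
    using assms by (simp add: suminf_ennreal2)
  then have "summable f"
    using assms(1) summable_suminf_not_top by fastforce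
  then show ?thesis
    using assms by (simp add: suminf_ennreal2 suminf_nonneg)
qed

definition connector :: "nat \<Rightarrow> nat \<Rightarrow> real" where
  "connector M N = fact M * fact N / fact (M + N)"

lemma connector_nonneg: "connector M N \<ge> 0"
  by (simp add: connector_def)

lemma connector_commute: "connector M N = connector N M"
  by (simp add: connector_def add.commute mult.commute)

lemma connector_Suc_right:
  "connector M (Suc N) = connector M N * real (Suc N) / real (M + Suc N)"
  by (simp add: connector_def field_simps)

lemma connector_le: "M \<ge> 1 \<Longrightarrow> connector M N \<le> 1 / real (Suc N)"
proof (induction N)
  case (Suc N)
  have "connector M (Suc N) \<le> 1 / real (Suc N) * real (Suc N) / real (M + Suc N)"
    unfolding connector_Suc_right using Suc by (intro divide_right_mono mult_right_mono) auto
  also have "\<dots> \<le> 1 / real (Suc (Suc N))"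
    using Suc.prems by (simp add: frac_le)
  finally show ?case .
qed (simp add: connector_def)

lemma connector_tendsto_0:
  assumes "M \<ge> 1"
  shows "connector M \<longlonglongrightarrow> 0"
proof (rule tendsto_sandwich[where f="\<lambda>_. 0" and h="\<lambda>N. 1 / real (Suc N)"])
  show "(\<lambda>N. 1 / real (Suc N)) \<longlonglongrightarrow> 0"
    using LIMSEQ_Suc[OF lim_const_over_n[of 1]] by simp
  show "\<forall>\<^sub>F N in sequentially. connector M N \<le> 1 / real (Suc N)"
    using connector_le[OF assms] by simp
qed (simp_all add: connector_nonneg)

lemma connector_diff:
  "connector M N - connector M (Suc N) = real M * connector M (Suc N) / real (Suc N)"
proof -
  have nz: "real M + real (Suc N) \<noteq> 0"
    by simp
  have "connector M N - connector M (Suc N) = connector M N * real M / (real M + real (Suc N))"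
    unfolding connector_Suc_right of_nat_add using nz by (simp add: field_simps del: of_nat_Suc)
  also have "\<dots> = real M * connector M (Suc N) / real (Suc N)"
    unfolding connector_Suc_right of_nat_add by (simp del: of_nat_Suc)
  finally show ?thesis .
qed

lemma connector_tail_sums:
  assumes "M \<ge> 1"
  shows "(\<lambda>N'. if N < N' then connector M N' / real N' else 0) sums (connector M N / real M)"
proof -
  have "(\<lambda>i. connector M (N + i) - connector M (Suc (N + i))) sums connector M N"
    using telescope_sums'[of "\<lambda>i. connector M (N + i)" 0]
      LIMSEQ_ignore_initial_segment[OF connector_tendsto_0[OF assms], of N]
    by (simp add: add.commute)
  then have "(\<lambda>i. (connector M (N + i) - connector M (Suc (N + i))) / real M)
      sums (connector M N / real M)"
    by (rule sums_divide)
  also have "(\<lambda>i. (connector M (N + i) - connector M (Suc (N + i))) / real M)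
      = (\<lambda>i. connector M (Suc (N + i)) / real (Suc (N + i)))"
    using assms by (simp only: connector_diff) simp
  finally have "(\<lambda>i. connector M (Suc (N + i)) / real (Suc (N + i))) sums (connector M N / real M)" .
  then show ?thesis
    by (subst sums_zero_iff_shift[of "Suc N", symmetric]) (auto simp: add.commute)
qed

text \<open>chain_sum t N is the sum of 1 / (n_1 \<cdots> n_t) over 0 < n_1 < \<dots> < n_t = N;
  for t > 0 its value at N = 0 is 0 because x / 0 = 0.\<close>

fun chain_sum :: "nat \<Rightarrow> nat \<Rightarrow> real" where
  "chain_sum 0 N = (if N = 0 then 1 else 0)"
| "chain_sum (Suc t) N = (\<Sum>N' < N. chain_sum t N') / real N"

lemma chain_sum_nonneg: "chain_sum t N \<ge> 0"
  by (induction t arbitrary: N) (auto intro!: sum_nonneg divide_nonneg_nonneg)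

lemma sum_chain_sum_lessThan_Suc: "(\<Sum>N<Suc n. chain_sum q N) = esym_recip q n"
proof (induction q arbitrary: n)
  case 0
  then show ?case by simp
next
  case (Suc q)
  have "(\<Sum>N<Suc n. chain_sum (Suc q) N) = (\<Sum>i<n. chain_sum (Suc q) (Suc i))"
    unfolding sum.lessThan_Suc_shift by simp
  also have "\<dots> = (\<Sum>i<n. esym_recip q i / real (Suc i))"
    by (simp only: chain_sum.simps Suc.IH)
  also have "\<dots> = esym_recip (Suc q) n"
    by (simp add: esym_recip_Suc sum.atLeast1_atMost_eq)
  finally show ?case .
qed

lemma chain_sum_Suc_Suc: "chain_sum (Suc q) (Suc n) = esym_recip q n / real (Suc n)"
  by (simp only: chain_sum.simps sum_chain_sum_lessThan_Suc)

text \<open>The connected sum of Seki and Yamamoto: a chain ending at M, with an extra factor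
  1 / M ^ j, is joined by the connector M! N! / (M + N)! to a chain ending at N.\<close>

definition connected_sum :: "nat \<Rightarrow> nat \<Rightarrow> nat \<Rightarrow> ennreal" where
  "connected_sum a j b =
     (\<Sum>M. \<Sum>N. ennreal (chain_sum a M / real M ^ j * connector M N * chain_sum b N))"

text \<open>The telescoping identity connector M N / M = \<Sum>N' > N. connector M N' / N'
  moves one factor 1 / M off the left chain and onto a new top of the right chain.\<close>

lemma connected_sum_transport:
  assumes "a \<ge> 1"
  shows "connected_sum a (Suc j) b = connected_sum a j (Suc b)"
proof -
  have inner: "(\<Sum>N. ennreal (chain_sum a M / real M ^ Suc j * connector M N * chain_sum b N))
      = (\<Sum>N. ennreal (chain_sum a M / real M ^ j * connector M N * chain_sum (Suc b) N))" for M
  proof (cases "M = 0")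
    case True
    with assms show ?thesis by (cases a) auto
  next
    case False
    define w where "w = chain_sum a M / real M ^ j"
    have w: "w \<ge> 0" unfolding w_def by (simp add: chain_sum_nonneg)
    have "(\<Sum>N. ennreal (chain_sum a M / real M ^ Suc j * connector M N * chain_sum b N))
        = (\<Sum>N. ennreal (w * (chain_sum b N * (connector M N / real M))))"
      using False by (intro suminf_cong) (simp add: w_def field_simps)
    also have "\<dots> = ennreal w * (\<Sum>N. ennreal (chain_sum b N * (connector M N / real M)))"
      by (rule suminf_ennreal_cmult_real[OF w]) (simp add: chain_sum_nonneg connector_nonneg)
    also have "\<dots> = ennreal w * (\<Sum>N'. ennreal (connector M N' / real N' * (\<Sum>N<N'. chain_sum b N)))"
      using False
      by (subst suminf_ennreal_tail_swap[OF connector_tail_sums])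
         (auto simp: chain_sum_nonneg connector_nonneg)
    also have "\<dots> = ennreal w * (\<Sum>N'. ennreal (connector M N' * chain_sum (Suc b) N'))"
      by simp
    also have "\<dots> = (\<Sum>N. ennreal (w * (connector M N * chain_sum (Suc b) N)))"
      by (rule suminf_ennreal_cmult_real[OF w, symmetric])
         (intro mult_nonneg_nonneg chain_sum_nonneg connector_nonneg)
    also have "\<dots> = (\<Sum>N. ennreal (chain_sum a M / real M ^ j * connector M N * chain_sum (Suc b) N))"
      by (simp add: w_def mult.assoc)
    finally show ?thesis .
  qed
  show ?thesis
    unfolding connected_sum_def by (simp only: inner)
qed

lemma connected_sum_transport_iter:
  "a \<ge> 1 \<Longrightarrow> connected_sum a i b = connected_sum a 0 (b + i)"
  by (induction i arbitrary: b) (simp_all add: connected_sum_transport)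

lemma connected_sum_commute: "connected_sum a 0 b = connected_sum b 0 a"
  unfolding connected_sum_def
  by (subst suminf_ennreal_swap) (simp add: connector_commute mult_ac)

lemma connected_sum_0_right: "connected_sum a j 0 = (\<Sum>M. ennreal (chain_sum a M / real M ^ j))"
proof -
  have "(\<Sum>N. ennreal (chain_sum a M / real M ^ j * connector M N * chain_sum 0 N))
      = ennreal (chain_sum a M / real M ^ j)" for M
    by (subst suminf_finite[of "{0}"]) (auto simp: connector_def)
  then show ?thesis
    unfolding connected_sum_def by simp
qed

lemma connected_sum_mzv:
  "connected_sum (Suc q) (Suc p) 0 = (\<Sum>n. ennreal (esym_recip q n / real (Suc n) ^ (p + 2)))"
proof -
  have "connected_sum (Suc q) (Suc p) 0 = (\<Sum>M. ennreal (chain_sum (Suc q) M / real M ^ Suc p))"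
    by (rule connected_sum_0_right)
  also have "\<dots> = (\<Sum>n. ennreal (chain_sum (Suc q) (Suc n) / real (Suc n) ^ Suc p))"
    using suminf_offset[of "\<lambda>M. ennreal (chain_sum (Suc q) M / real M ^ Suc p)" 1]
    by (simp add: summableI)
  also have "\<dots> = (\<Sum>n. ennreal (esym_recip q n / real (Suc n) ^ (p + 2)))"
    unfolding chain_sum_Suc_Suc by (simp add: field_simps)
  finally show ?thesis .
qed

lemma mzv_duality_ennreal:
  "(\<Sum>n. ennreal (esym_recip q n / real (Suc n) ^ (p + 2)))
     = (\<Sum>n. ennreal (esym_recip p n / real (Suc n) ^ (q + 2)))"
  using connected_sum_transport_iter[of "Suc q" "Suc p" 0]
    connected_sum_transport_iter[of "Suc p" "Suc q" 0]
    connected_sum_commute[of "Suc q" "Suc p"]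
  by (simp add: connected_sum_mzv)

theorem mzv_duality: "mzv ((p + 2) # replicate q 1) = mzv ((q + 2) # replicate p 1)"
proof -
  have dual: "mzv ((p + 2) # replicate q 1) = mzv ((q + 2) # replicate p 1)" if "q \<ge> 1" for p q
    unfolding mzv_replicate_one using that
    by (intro suminf_eq_if_ennreal_suminf_eq mzv_duality_ennreal summable_mzv_replicate_one)
       (auto simp: esym_recip_nonneg)
  consider "q \<ge> 1" | "p \<ge> 1" | "p = 0" "q = 0"
    by linarith
  then show ?thesis
    by cases (simp_all only: dual[symmetric] dual)
qed

definition mzv_block_term :: "nat \<Rightarrow> nat \<Rightarrow> nat \<Rightarrow> real" where
  "mzv_block_term m h n = (\<Sum>k\<le>h. esym_recip k n / real (Suc n) ^ (m - k))"

lemma mzv_block_term_nonneg: "mzv_block_term m h n \<ge> 0"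
  unfolding mzv_block_term_def by (intro sum_nonneg divide_nonneg_nonneg esym_recip_nonneg) auto

lemma sum_mzv_eq_suminf:
  assumes "h + 3 \<le> m"
  shows "summable (mzv_block_term m h)"
    and "(\<Sum>k\<le>h. mzv ((m - k) # replicate k 1)) = suminf (mzv_block_term m h)"
proof -
  have summable: "summable (\<lambda>n. esym_recip k n / real (Suc n) ^ (m - k))" if "k \<in> {..h}" for k
    using that assms by (intro summable_mzv_replicate_one) auto
  show "summable (mzv_block_term m h)"
    unfolding mzv_block_term_def[abs_def] by (rule summable_sum[OF summable])
  show "(\<Sum>k\<le>h. mzv ((m - k) # replicate k 1)) = suminf (mzv_block_term m h)"
    unfolding mzv_block_term_def[abs_def] mzv_replicate_one by (rule suminf_sum[OF summable, symmetric])
qed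

lemma mzv_block_term_eq:
  assumes "h \<le> m"
  shows "mzv_block_term m h n = (\<Sum>k\<le>h. real (Suc n) ^ k * esym_recip k n) / real (Suc n) ^ m"
  unfolding mzv_block_term_def sum_divide_distrib
proof (intro sum.cong refl)
  fix k assume "k \<in> {..h}"
  then have "real (Suc n) ^ m = real (Suc n) ^ k * real (Suc n) ^ (m - k)"
    using assms by (simp flip: power_add)
  then show "esym_recip k n / real (Suc n) ^ (m - k) = real (Suc n) ^ k * esym_recip k n / real (Suc n) ^ m"
    by simp
qed

lemma prod_one_plus_Suc_divide: "(\<Prod>j = 1..n. 1 + real (Suc n) / real j) = real ((2 * n + 1) choose n)"
  using prod_one_plus_of_nat_divide[where N=n and c="Suc n"] by (simp add: mult_2)

lemma mzv_block_term_le_binomial: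
  "h \<le> m \<Longrightarrow> mzv_block_term m h n \<le> real ((2 * n + 1) choose n) / real (Suc n) ^ m"
  unfolding mzv_block_term_eq prod_one_plus_Suc_divide[symmetric]
  by (intro divide_right_mono esym_recip_weighted_sum_le) auto

lemma mzv_block_term_eq_binomial:
  "n \<le> h \<Longrightarrow> h \<le> m \<Longrightarrow>
    mzv_block_term m h n = real ((2 * n + 1) choose n) / real (Suc n) ^ m"
  by (simp only: mzv_block_term_eq esym_recip_generating_function prod_one_plus_Suc_divide)

lemma mzv_block_term_le_power:
  assumes "h < m"
  shows "mzv_block_term m h n \<le> 1 / real (Suc n) ^ (m - Suc h)"
proof -
  have "(\<Sum>k\<le>h. real (Suc n) ^ k * esym_recip k n)
      \<le> (\<Sum>k\<le>h. real (Suc n) ^ h * esym_recip k n)"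
    by (intro sum_mono mult_right_mono power_increasing) (auto simp: esym_recip_nonneg)
  also have "\<dots> \<le> real (Suc n) ^ h * real (Suc n)"
    unfolding sum_distrib_left[symmetric] by (intro mult_left_mono sum_esym_recip_le) auto
  finally have "mzv_block_term m h n \<le> real (Suc n) ^ Suc h / real (Suc n) ^ m"
    using assms by (simp add: mzv_block_term_eq divide_right_mono mult.commute)
  also have "\<dots> = 1 / real (Suc n) ^ (m - Suc h)"
    using assms by (simp add: power_diff)
  finally show ?thesis .
qed

lemma power_mult_square_le_small:
  fixes b x :: real
  assumes "1 \<le> b" "b \<le> x" "x \<le> b ^ 2"
  shows "b ^ m * x ^ 2 \<le> b ^ 4 * x ^ m"
proof -
  have "x ^ 2 \<le> (b ^ 2) ^ 2"
    using assms by (intro power_mono) auto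
  then have "x ^ 2 \<le> b ^ 4"
    by (simp flip: power_mult)
  moreover have "b ^ m \<le> x ^ m"
    using assms by (intro power_mono) auto
  ultimately show ?thesis
    using assms by (subst mult.commute) (intro mult_mono, auto)
qed

lemma power_mult_square_le_large:
  fixes b x :: real
  assumes "1 \<le> b" "b ^ 2 \<le> x" "m \<le> 2 * r" "2 \<le> r"
  shows "b ^ m * x ^ 2 \<le> b ^ 4 * x ^ r"
proof -
  have "b ^ m \<le> b ^ (4 + 2 * (r - 2))"
    using assms by (intro power_increasing) auto
  also have "\<dots> = b ^ 4 * (b ^ 2) ^ (r - 2)"
    by (simp add: power_add power_mult)
  also have "\<dots> \<le> b ^ 4 * x ^ (r - 2)"
    using assms by (intro mult_left_mono power_mono) auto
  finally have "b ^ m * x ^ 2 \<le> b ^ 4 * x ^ (r - 2) * x ^ 2"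
    by (rule mult_right_mono) simp
  also have "\<dots> = b ^ 4 * x ^ (r - 2 + 2)"
    by (simp only: power_add mult.assoc)
  also have "r - 2 + 2 = r"
    using assms(4) by simp
  finally show ?thesis .
qed

lemma binomial_odd_le_power_4: "real ((2 * n + 1) choose n) \<le> 4 ^ Suc n"
proof -
  have "real ((2 * n + 1) choose n) \<le> 2 ^ (2 * n + 1)"
    by (metis binomial_le_pow2 of_nat_le_iff of_nat_numeral of_nat_power)
  then show ?thesis
    by (simp add: power_mult)
qed

definition mzv_tail_const :: "nat \<Rightarrow> real" where
  "mzv_tail_const K = 4 ^ (K + 1) ^ 2 * real (K + 1) ^ 4"

lemma mzv_block_term_tail_bound:
  assumes "K \<le> n" "2 * h + 2 \<le> m" "4 \<le> m"
  shows "mzv_block_term m h n \<le> mzv_tail_const K / (real (K + 1) ^ m * real (Suc n) ^ 2)"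
proof -
  define x b where "x = real (Suc n)" and "b = real (K + 1)"
  have b: "1 \<le> b" "b \<le> x"
    using assms(1) by (simp_all add: x_def b_def)
  have "mzv_block_term m h n \<le> 4 ^ (K + 1) ^ 2 * (b ^ 4 / (b ^ m * x ^ 2))"
  proof (cases "Suc n < (K + 1) ^ 2")
    case True
    then have "Suc n \<le> (K + 1) ^ 2"
      by simp
    then have "x \<le> b ^ 2"
      unfolding x_def b_def by (metis of_nat_le_iff of_nat_power)
    then have "b ^ m * x ^ 2 \<le> b ^ 4 * x ^ m"
      by (rule power_mult_square_le_small[OF b])
    then have "1 / x ^ m \<le> b ^ 4 / (b ^ m * x ^ 2)"
      using b by (simp add: field_simps)
    moreover have "real ((2 * n + 1) choose n) \<le> 4 ^ (K + 1) ^ 2"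
      using True by (intro order.trans[OF binomial_odd_le_power_4] power_increasing) auto
    ultimately have "real ((2 * n + 1) choose n) / x ^ m \<le> 4 ^ (K + 1) ^ 2 * (b ^ 4 / (b ^ m * x ^ 2))"
      using b by (simp add: divide_inverse mult_mono)
    then show ?thesis
      using mzv_block_term_le_binomial[of h m n] assms by (simp add: x_def)
  next
    case False
    then have "(K + 1) ^ 2 \<le> Suc n"
      by simp
    then have "b ^ 2 \<le> x"
      unfolding x_def b_def by (metis of_nat_le_iff of_nat_power)
    then have "b ^ m * x ^ 2 \<le> b ^ 4 * x ^ (m - Suc h)"
      using assms by (intro power_mult_square_le_large[OF b(1)]) auto
    then have "1 / x ^ (m - Suc h) \<le> b ^ 4 / (b ^ m * x ^ 2)"
      using b by (simp add: field_simps)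
    also have "\<dots> \<le> 4 ^ (K + 1) ^ 2 * (b ^ 4 / (b ^ m * x ^ 2))"
      using mult_right_mono[of 1 "4 ^ (K + 1) ^ 2" "b ^ 4 / (b ^ m * x ^ 2)"] b by simp
    finally show ?thesis
      using mzv_block_term_le_power[of h m n] assms by (simp add: x_def)
  qed
  then show ?thesis
    by (simp add: mzv_tail_const_def b_def x_def)
qed

lemma sum_mzv_block_estimate:
  assumes "K \<le> Suc h" "2 * h + 2 \<le> m" "4 \<le> m"
  shows "\<bar>(\<Sum>k\<le>h. mzv ((m - k) # replicate k 1))
            - (\<Sum>n<K. real ((2 * n + 1) choose n) / real (Suc n) ^ m)\<bar>
         \<le> mzv_tail_const K * (\<Sum>n. 1 / real (Suc n) ^ 2) / real (K + 1) ^ m"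
proof -
  define c where "c = mzv_tail_const K / real (K + 1) ^ m"
  have summable: "summable (mzv_block_term m h)"
    and sum_eq: "(\<Sum>k\<le>h. mzv ((m - k) # replicate k 1)) = suminf (mzv_block_term m h)"
    using assms by (intro sum_mzv_eq_suminf; simp)+
  have head: "(\<Sum>n<K. real ((2 * n + 1) choose n) / real (Suc n) ^ m) = (\<Sum>n<K. mzv_block_term m h n)"
    using assms by (intro sum.cong refl mzv_block_term_eq_binomial[symmetric]) auto
  have tail_summable: "summable (\<lambda>n. mzv_block_term m h (n + K))"
    using summable by (subst summable_iff_shift)
  have "(\<Sum>n. mzv_block_term m h (n + K)) \<le> (\<Sum>n. c * (1 / real (Suc n) ^ 2))"
  proof (rule suminf_le[OF _ tail_summable summable_mult[OF summable_inverse_Suc_squared]])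
    fix n
    have "mzv_block_term m h (n + K) \<le> c / real (Suc (n + K)) ^ 2"
      using mzv_block_term_tail_bound[of K "n + K" h m] assms by (simp add: c_def field_simps)
    also have "\<dots> \<le> c / real (Suc n) ^ 2"
      by (intro divide_left_mono power_mono) (auto simp: c_def mzv_tail_const_def)
    finally show "mzv_block_term m h (n + K) \<le> c * (1 / real (Suc n) ^ 2)"
      by simp
  qed
  also have "\<dots> = mzv_tail_const K * (\<Sum>n. 1 / real (Suc n) ^ 2) / real (K + 1) ^ m"
    unfolding suminf_mult[OF summable_inverse_Suc_squared] by (simp add: c_def)
  finally have upper: "(\<Sum>n. mzv_block_term m h (n + K))
      \<le> mzv_tail_const K * (\<Sum>n. 1 / real (Suc n) ^ 2) / real (K + 1) ^ m" .
  have "(\<Sum>n. mzv_block_term m h (n + K)) \<ge> 0"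
    by (intro suminf_nonneg tail_summable mzv_block_term_nonneg)
  moreover have "(\<Sum>k\<le>h. mzv ((m - k) # replicate k 1)) - (\<Sum>n<K. mzv_block_term m h n)
      = (\<Sum>n. mzv_block_term m h (n + K))"
    unfolding sum_eq using suminf_split_initial_segment[OF summable, of K] by simp
  ultimately show ?thesis
    unfolding head using upper by simp
qed

lemma sum_mzv_weight_split:
  fixes m :: nat
  defines "f \<equiv> \<lambda>k. mzv ((m - k) # replicate k 1)"
  assumes "3 \<le> m"
  shows "(\<Sum>k = 0..m - 2. f k) = (\<Sum>k \<le> m div 2 - 1. f k) + (\<Sum>k \<le> m - 2 - m div 2. f k)"
proof -
  define L where "L = m div 2"
  have L: "1 \<le> L" "L + 2 \<le> m" "2 * L \<le> m" "m \<le> 2 * L + 1"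
    using assms unfolding L_def by auto
  have "{0..m - 2} = {..L - 1} \<union> {L..m - 2}"
    using L by auto
  then have "(\<Sum>k = 0..m - 2. f k) = (\<Sum>k \<in> {..L - 1} \<union> {L..m - 2}. f k)"
    by simp
  also have "\<dots> = (\<Sum>k \<le> L - 1. f k) + (\<Sum>k = L..m - 2. f k)"
    by (rule sum.union_disjoint) (use L in auto)
  also have "(\<Sum>k = L..m - 2. f k) = (\<Sum>k \<le> m - 2 - L. f (m - 2 - k))"
    by (rule sum.reindex_bij_witness[of _ "\<lambda>k. m - 2 - k" "\<lambda>k. m - 2 - k"])
       (use L in \<open>auto intro!: arg_cong[of _ _ f]\<close>)
  also have "\<dots> = (\<Sum>k \<le> m - 2 - L. f k)"
  proof (intro sum.cong refl)
    fix k assume "k \<in> {..m - 2 - L}"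
    then have "m - (m - 2 - k) = k + 2" "m - k = m - 2 - k + 2"
      using L by auto
    then show "f (m - 2 - k) = f k"
      unfolding f_def by (simp only: mzv_duality)
  qed
  finally show ?thesis
    unfolding L_def .
qed

lemma central_binomial_Suc: "(2 * Suc n) choose Suc n = 2 * ((2 * n + 1) choose n)"
proof -
  have "(2 * n + 1) choose Suc n = (2 * n + 1) choose n"
    using binomial_symmetric[of "Suc n" "2 * n + 1"] by simp
  then show ?thesis
    using binomial_Suc_Suc[of "2 * n + 1" n] by simp
qed

lemma central_binomial_sum_shift:
  "(\<Sum>j = 1..K. real ((2 * j) choose j) / real j ^ m)
     = 2 * (\<Sum>n<K. real ((2 * n + 1) choose n) / real (Suc n) ^ m)"
  unfolding One_nat_def sum.atLeast1_atMost_eq central_binomial_Suc by (simp add: sum_distrib_left)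

lemma sum_mzv_weight_estimate:
  "\<forall>\<^sub>F m in at_top.
     \<bar>(\<Sum>k = 0..m - 2. mzv ((m - k) # replicate k 1))
        - (\<Sum>j = 1..K. real ((2 * j) choose j) / real j ^ m)\<bar>
     \<le> 2 * mzv_tail_const K * (\<Sum>n. 1 / real (Suc n) ^ 2) / real (K + 1) ^ m"
proof (rule eventually_at_top_linorderI)
  fix m :: nat
  assume m: "m \<ge> 2 * K + 4"
  define L where "L = m div 2"
  have L: "2 * L \<le> m" "m \<le> 2 * L + 1"
    unfolding L_def by auto
  define B where "B = (\<Sum>n<K. real ((2 * n + 1) choose n) / real (Suc n) ^ m)"
  define C where "C = mzv_tail_const K * (\<Sum>n. 1 / real (Suc n) ^ 2) / real (K + 1) ^ m"
  have lower: "\<bar>(\<Sum>k \<le> L - 1. mzv ((m - k) # replicate k 1)) - B\<bar> \<le> C"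
    unfolding B_def C_def by (rule sum_mzv_block_estimate) (use L m in auto)
  have upper: "\<bar>(\<Sum>k \<le> m - 2 - L. mzv ((m - k) # replicate k 1)) - B\<bar> \<le> C"
    unfolding B_def C_def by (rule sum_mzv_block_estimate) (use L m in auto)
  have split: "(\<Sum>k = 0..m - 2. mzv ((m - k) # replicate k 1))
      = (\<Sum>k \<le> L - 1. mzv ((m - k) # replicate k 1))
        + (\<Sum>k \<le> m - 2 - L. mzv ((m - k) # replicate k 1))"
    unfolding L_def using m by (intro sum_mzv_weight_split) simp
  have "\<bar>(\<Sum>k = 0..m - 2. mzv ((m - k) # replicate k 1)) - 2 * B\<bar> \<le> 2 * C"
    using lower upper unfolding split abs_le_iff by linarith
  then show "\<bar>(\<Sum>k = 0..m - 2. mzv ((m - k) # replicate k 1))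
        - (\<Sum>j = 1..K. real ((2 * j) choose j) / real j ^ m)\<bar>
     \<le> 2 * mzv_tail_const K * (\<Sum>n. 1 / real (Suc n) ^ 2) / real (K + 1) ^ m"
    unfolding central_binomial_sum_shift B_def C_def by simp
qed

lemma sum_mzv_weight_tendsto: "(\<lambda>m. \<Sum>k = 0..m - 2. mzv ((m - k) # replicate k 1)) \<longlonglongrightarrow> 2"
proof -
  have "(\<lambda>m. 2 * mzv_tail_const 1 * (\<Sum>n. 1 / real (Suc n) ^ 2) * (1 / 2) ^ m) \<longlonglongrightarrow> 0"
    by (intro tendsto_mult_right_zero LIMSEQ_power_zero) simp
  then have "(\<lambda>m. (\<Sum>k = 0..m - 2. mzv ((m - k) # replicate k 1)) - 2) \<longlonglongrightarrow> 0"
    by (rule Lim_null_comparison[rotated])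
       (use sum_mzv_weight_estimate[of 1] in \<open>simp add: power_divide\<close>)
  then show ?thesis
    by (rule LIM_zero_cancel)
qed

theorem corollary4:
  fixes K :: nat
  assumes "K \<ge> 1"
  shows "((\<lambda>m. (\<Sum>k = 0..m - 2. mzv ((m - k) # replicate k 1))
              - (\<Sum>j = 1..K. real ((2 * j) choose j) / real j ^ m))
           \<in> O[at_top](\<lambda>m. 1 / (real K + 1) ^ m)) \<and>
         ((\<lambda>m. (\<Sum>k = 0..m - 2. mzv ((m - k) # replicate k 1)) / real (m - 1))
           \<sim>[at_top] (\<lambda>m. 2 / real m))"
proof
  show "(\<lambda>m. (\<Sum>k = 0..m - 2. mzv ((m - k) # replicate k 1))
              - (\<Sum>j = 1..K. real ((2 * j) choose j) / real j ^ m))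
           \<in> O[at_top](\<lambda>m. 1 / (real K + 1) ^ m)"
    using sum_mzv_weight_estimate[of K]
    by (intro bigoI[where c="2 * mzv_tail_const K * (\<Sum>n. 1 / real (Suc n) ^ 2)"])
       (simp add: add.commute)
  have "(\<lambda>m. real (m - 1)) \<sim>[at_top] (\<lambda>m. real m)"
    by real_asymp
  then show "(\<lambda>m. (\<Sum>k = 0..m - 2. mzv ((m - k) # replicate k 1)) / real (m - 1))
           \<sim>[at_top] (\<lambda>m. 2 / real m)"
    using tendsto_imp_asymp_equiv_const[OF sum_mzv_weight_tendsto]
    by (intro asymp_equiv_divide) simp_all
qed

end
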